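(* Let $d\ge2$, $n=3$, and $\mathcal T=\sum_{k=1}^4\mathbf v_k^{\otimes d}$. (i) If $d=2$, every unit vector $\mathbf v\in\mathbb R^3$ is an eigenvector with eigenvalue $\frac43$. (ii) If $d\ge3$ is odd, a unit vector $\mathbf v\in\mathbb R^3$ is an eigenvector of $\mathcal T$ if and only if there is a nonempty $K\subset\{1,2,3,4\}$ with $|K|\le3$ such that $\mathbf v=\sum_{k\in K}\mathbf v_k\big/\sqrt{|K|(4-|K|)/3}$, with eigenvalue $\mu=\dfrac{(4-|K|)^{d-1}-|K|^{d-1}}{3^{d/2}(|K|(4-|K|))^{d/2-1}}$. Moreover $\mu=0$ if and only if $|K|=2$, and the normalized eigenvectors with eigenvalue $0$ are, up to sign, exactly the three linearly independent vectors $(\mathbf v_1+\mathbf v_2)/\sqrt{4/3}$, $(\mathbf v_1+\mathbf v_3)/\sqrt{4/3}$, $(\mathbf v_1+\mathbf v_4)/\sqrt{4/3}$. (iii) If $d\ge4$ is even, a unit vector $\mathbf v\in\mathbb R^3$ is an eigenvector of $\mathcal T$ if and only if either (a) there is a nonempty $K\subset\{1,2,3,4\}$ with $|K|\le3$ such that $\mathbf v=\sum_{k\in K}\mathbf v_k/\sqrt{|K|(4-|K|)/3}$, with positive eigenvalue $\mu=\dfrac{(4-|K|)^{d-1}+|K|^{d-1}}{3^{d/2}(|K|(4-|K|))^{d/2-1}}$; or (b) there are nonempty disjoint $K_1,K_2\subset\{1,2,3,4\}$ with $|K_1\cup K_2|\le3$ and numbers $0<a\le s^*<b\le1$ with $|K_1|a+|K_2|b=1$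 and $g(a)/a=g(b)/b$, such that $\mathbf v=\big(a\sum_{k\in K_1}\mathbf v_k+b\sum_{k\in K_2}\mathbf v_k\big)\big/\sqrt{(4a^2|K_1|+4b^2|K_2|-1)/3}$, with positive eigenvalue $\mu=\dfrac{|K_1|(4a-1)^d+|K_2|(4b-1)^d+4-|K_1|-|K_2|}{3^{d/2}(4a^2|K_1|+4b^2|K_2|-1)^{d/2}}$.
   Context: Simplex frame for $n=3$: $\mathbf v_k=\sqrt{4/3}\,\mathbf e_k-3^{-3/2}\,\mathbf 1_3$ for $k=1,2,3$ and $\mathbf v_4=-\frac1{\sqrt3}\mathbf 1_3$, where $\mathbf e_k$ are unit vectors of $\mathbb R^3$ and $\mathbf 1_3=(1,1,1)^\top$; these are unit vectors with pairwise inner product $-\frac13$ and sum $\mathbf 0$. $\mathcal T\cdot\mathbf v^{d-1}=\sum_{k=1}^4\langle\mathbf v,\mathbf v_k\rangle^{d-1}\mathbf v_k$; $\mathbf v\ne\mathbf 0$ is an eigenvector with eigenvalue $\mu$ if $\mathcal T\cdot\mathbf v^{d-1}=\mu\mathbf v$. $g(s)=(4s-1)^{d-1}-(-1)^{d-1}$, and for even $d\ge4$, $s^*\in[\frac13,\frac12)$ is the unique point such that $g(s)/s$ is strictly decreasing on $[0,s^*]$ and strictly increasing on $[s^*,\infty)$. *)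

theory Defs
  imports "HOL-Analysis.Analysis"
begin

text \<open>Simplex frame in R^3: v_k = sqrt(4/3) e_k - 3^(-3/2) 1 for k = 1,2,3 and
  v_4 = -(1/sqrt 3) 1. The unit vector e_k is the axis with index k-1 of type 3.\<close>
definition svec :: "nat \<Rightarrow> real^3" where
  "svec k = (if k = 4 then (- 1 / sqrt 3) *\<^sub>R (\<chi> i. 1)
             else sqrt (4/3) *\<^sub>R axis (of_nat (k - 1) :: 3) 1 - (3 powr (-3/2)) *\<^sub>R (\<chi> i. 1))"

text \<open>T . v^(d-1) = sum_k <v, v_k>^(d-1) v_k\<close>
definition Tapply :: "nat \<Rightarrow> real^3 \<Rightarrow> real^3" where
  "Tapply d v = (\<Sum>k\<in>{1..4}. (v \<bullet> svec k) ^ (d - 1) *\<^sub>R svec k)"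

definition is_eigenpair :: "nat \<Rightarrow> real^3 \<Rightarrow> real \<Rightarrow> bool" where
  "is_eigenpair d v \<mu> \<longleftrightarrow> v \<noteq> 0 \<and> Tapply d v = \<mu> *\<^sub>R v"

definition gfun :: "nat \<Rightarrow> real \<Rightarrow> real" where
  "gfun d s = (4 * s - 1) ^ (d - 1) - (-1) ^ (d - 1)"

text \<open>s*: the unique point of [1/3,1/2) where g(s)/s switches from strictly decreasing
  to strictly increasing (monotonicity on (0,s*] since g(s)/s is undefined at 0).\<close>
definition s_star :: "nat \<Rightarrow> real" where
  "s_star d = (THE s. 1/3 \<le> s \<and> s < 1/2 \<and>
     (\<forall>x\<in>{0<..s}. \<forall>y\<in>{0<..s}. x < y \<longrightarrow> gfun d y / y < gfun d x / x) \<and>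
     (\<forall>x\<in>{s..}. \<forall>y\<in>{s..}. x < y \<longrightarrow> gfun d x / x < gfun d y / y))"

end

theory Submission
  imports Defs
begin

text \<open>
  The simplex frame is tight and sums to zero: \<Sum>k (v \<bullet> v_k) v_k = 4/3 v and \<Sum>k v_k = 0.
  Consequently, with p_k = v \<bullet> v_k, a unit vector v is an eigenvector with eigenvalue \<mu> iff
  p_k^(d-1) - (3/4) \<mu> p_k does not depend on k, and then \<mu> = \<Sum>k p_k^d; for d = 2 this holds
  for every v. For odd d the function x \<mapsto> x^(d-1) - \<lambda> x is strictly convex, so the p_k take
  exactly two values and v is a normalised sum of the frame vectors of a face K. For even d,
  shifting and rescaling the p_k to nonnegative x_k with sum 1 turns the condition into
  g(x_k) = \<Lambda> x_k; since g(s)/s decreases up to s* and increases afterwards, the positive x_k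
  take at most two values a \<le> s* < b, which gives the faces K and the pairs K1, K2.
\<close>

section \<open>The simplex frame\<close>

definition svec_pattern :: "nat \<Rightarrow> 3 \<Rightarrow> real" where
  "svec_pattern k i = (if k = 4 then -3 else if i = of_nat (k - 1) then 5 else -1)"

lemma svec_nth: "svec k $ i = svec_pattern k i / (3 * sqrt 3)"
proof -
  have "sqrt (4/3) = 6 / (3 * sqrt 3)" "(3::real) powr (-3/2) = 1 / (3 * sqrt 3)"
    by (simp_all add: real_sqrt_divide powr_minus_divide powr_add[of 3 1 "1/2", simplified] powr_half_sqrt)
  then show ?thesis
    by (simp add: svec_def svec_pattern_def axis_def field_simps)
qed

lemma inner_svec_pattern: "u \<bullet> svec k = (\<Sum>i\<in>UNIV. u $ i * svec_pattern k i) / (3 * sqrt 3)"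
  by (simp add: inner_vec_def svec_nth sum_divide_distrib)

lemma inner_svec:
  assumes "i \<in> {1..4}" "j \<in> {1..4}"
  shows "svec i \<bullet> svec j = (if i = j then 1 else -1/3)"
proof -
  have "svec i \<bullet> svec j = (\<Sum>l\<in>UNIV. svec_pattern i l * svec_pattern j l) / 27"
    by (simp add: inner_svec_pattern svec_nth sum_divide_distrib[symmetric] mult.assoc)
  moreover have "i = 1 \<or> i = 2 \<or> i = 3 \<or> i = 4" "j = 1 \<or> j = 2 \<or> j = 3 \<or> j = 4"
    using assms by auto
  ultimately show ?thesis by (elim disjE) (simp_all add: sum_3 svec_pattern_def)
qed

lemma svec_pattern_orthogonality:
  "(\<Sum>k\<in>{1..4}. svec_pattern k l * svec_pattern k i) = (if l = i then 36 else 0)"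
proof -
  have "{1..4::nat} = {1,2,3,4}" by auto
  moreover have "l = 1 \<or> l = 2 \<or> l = 3" "i = 1 \<or> i = 2 \<or> i = 3" by (rule exhaust_3)+
  ultimately show ?thesis by (elim disjE) (simp_all add: svec_pattern_def)
qed

lemma svec_frame_expansion: "(\<Sum>k\<in>{1..4}. (v \<bullet> svec k) *\<^sub>R svec k) = (4/3) *\<^sub>R (v::real^3)"
unfolding vec_eq_iff
proof
  fix i
  have "(\<Sum>k\<in>{1..4}. (v \<bullet> svec k) *\<^sub>R svec k) $ i
      = (\<Sum>l\<in>UNIV. v $ l * (\<Sum>k\<in>{1..4}. svec_pattern k l * svec_pattern k i)) / 27"
    by (simp add: inner_svec_pattern svec_nth sum_distrib_left sum_distrib_right sum_divide_distrib mult_ac)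
      (rule sum.swap)
  also have "\<dots> = (4/3) * v $ i"
    unfolding svec_pattern_orthogonality by (simp add: if_distrib cong: if_cong)
  finally show "(\<Sum>k\<in>{1..4}. (v \<bullet> svec k) *\<^sub>R svec k) $ i = ((4/3) *\<^sub>R v) $ i" by simp
qed

section \<open>Frame combinations and the eigenvector equation\<close>

definition frame_comb :: "(nat \<Rightarrow> real) \<Rightarrow> real^3" where
  "frame_comb x = (\<Sum>k\<in>{1..4}. x k *\<^sub>R svec k)"

lemma inner_frame_comb_svec:
  assumes "i \<in> {1..4}"
  shows "frame_comb x \<bullet> svec i = (4 * x i - (\<Sum>k\<in>{1..4}. x k)) / 3"
proof -
  have "frame_comb x \<bullet> svec i = (\<Sum>k\<in>{1..4}. x k * (svec k \<bullet> svec i))"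
    by (simp add: frame_comb_def inner_sum_left)
  also have "\<dots> = (\<Sum>k\<in>{1..4}. (if k = i then 4/3 * x k else 0) - x k / 3)"
    by (rule sum.cong) (use assms in \<open>auto simp: inner_svec\<close>)
  also have "\<dots> = (4 * x i - (\<Sum>k\<in>{1..4}. x k)) / 3"
    unfolding sum_subtractf sum_divide_distrib[symmetric] using assms by simp
  finally show ?thesis .
qed

lemma inner_frame_comb_self:
  "frame_comb x \<bullet> frame_comb x = (4 * (\<Sum>k\<in>{1..4}. (x k)\<^sup>2) - (\<Sum>k\<in>{1..4}. x k)\<^sup>2) / 3"
proof -
  have "frame_comb x \<bullet> frame_comb x = (\<Sum>k\<in>{1..4}. x k * (frame_comb x \<bullet> svec k))"
    by (simp add: frame_comb_def[of x] inner_sum_right)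
  also have "\<dots> = (\<Sum>k\<in>{1..4}. 4/3 * (x k)\<^sup>2 - (\<Sum>j\<in>{1..4}. x j) / 3 * x k)"
    by (rule sum.cong) (auto simp: inner_frame_comb_svec field_simps power2_eq_square)
  also have "\<dots> = (4 * (\<Sum>k\<in>{1..4}. (x k)\<^sup>2) - (\<Sum>k\<in>{1..4}. x k)\<^sup>2) / 3"
    unfolding sum_subtractf sum_distrib_left[symmetric] by (simp add: power2_eq_square field_simps)
  finally show ?thesis .
qed

lemma frame_comb_const: "frame_comb (\<lambda>k. c) = 0"
proof -
  have "{1..4::nat} = {1,2,3,4}" by auto
  then have "frame_comb (\<lambda>k. c) \<bullet> frame_comb (\<lambda>k. c) = 0"
    by (simp add: inner_frame_comb_self power2_eq_square)
  then show ?thesis by simp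
qed

lemma frame_comb_linear: "frame_comb (\<lambda>k. a * x k + b * y k) = a *\<^sub>R frame_comb x + b *\<^sub>R frame_comb y"
  by (simp add: frame_comb_def scaleR_add_left sum.distrib scaleR_sum_right)

lemma frame_comb_cong: "(\<And>k. k \<in> {1..4} \<Longrightarrow> x k = y k) \<Longrightarrow> frame_comb x = frame_comb y"
  unfolding frame_comb_def by (rule sum.cong) auto

lemma frame_comb_eq_zero_imp_const:
  assumes "frame_comb x = 0" "i \<in> {1..4}" "j \<in> {1..4}"
  shows "x i = x j"
  using inner_frame_comb_svec[of i x] inner_frame_comb_svec[of j x] assms by simp

lemma frame_comb_eq_imp_diff_const:
  assumes "frame_comb x = frame_comb y" "i \<in> {1..4}" "j \<in> {1..4}"
  shows "x i - y i = x j - y j"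
proof -
  have "frame_comb (\<lambda>k. x k - y k) = 0"
    using frame_comb_linear[of 1 x "-1" y] assms(1) by simp
  from frame_comb_eq_zero_imp_const[OF this assms(2,3)] show ?thesis .
qed

lemma frame_comb_analysis: "v = (3/4) *\<^sub>R frame_comb (\<lambda>k. v \<bullet> svec k)"
  using svec_frame_expansion[of v] by (simp add: frame_comb_def)

lemma sum_inner_svec: "(\<Sum>k\<in>{1..4}. v \<bullet> svec k) = 0"
  using frame_comb_const[of 1] by (simp add: frame_comb_def inner_sum_right[symmetric])

lemma sum_inner_svec_sq: "(\<Sum>k\<in>{1..4}. (v \<bullet> svec k)\<^sup>2) = 4/3 * (v \<bullet> v)"
proof -
  have "v \<bullet> v = (3/4) * (\<Sum>k\<in>{1..4}. (v \<bullet> svec k) * (v \<bullet> svec k))"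
    by (subst (2) frame_comb_analysis) (simp add: frame_comb_def inner_sum_right sum_distrib_left)
  then show ?thesis by (simp add: power2_eq_square)
qed

lemma Tapply_eq_frame_comb: "Tapply d v = frame_comb (\<lambda>k. (v \<bullet> svec k) ^ (d - 1))"
  by (simp add: Tapply_def frame_comb_def)

lemma quadratic_eigenpair: "norm v = 1 \<Longrightarrow> is_eigenpair 2 v (4/3)"
  using svec_frame_expansion[of v] by (auto simp: is_eigenpair_def Tapply_def)

lemma eigenvalue_eq_sum_power:
  assumes "norm v = 1" "is_eigenpair d v \<mu>" "d \<ge> 1"
  shows "\<mu> = (\<Sum>k\<in>{1..4}. (v \<bullet> svec k) ^ d)"
proof -
  have "v \<bullet> v = 1" using assms(1) by (simp add: dot_square_norm)
  then have "\<mu> = Tapply d v \<bullet> v" using assms(2) by (simp add: is_eigenpair_def)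
  also have "\<dots> = (\<Sum>k\<in>{1..4}. (v \<bullet> svec k) ^ d)"
    unfolding Tapply_def inner_sum_left
    using assms(3) by (intro sum.cong) (simp_all add: inner_commute power_eq_if)
  finally show ?thesis .
qed

lemma eigenpair_imp_level_const:
  assumes "is_eigenpair d v \<mu>" "i \<in> {1..4}" "j \<in> {1..4}"
  shows "(v \<bullet> svec i) ^ (d - 1) - (3/4 * \<mu>) * (v \<bullet> svec i)
       = (v \<bullet> svec j) ^ (d - 1) - (3/4 * \<mu>) * (v \<bullet> svec j)"
proof -
  have "frame_comb (\<lambda>k. (3/4 * \<mu>) * (v \<bullet> svec k)) = \<mu> *\<^sub>R v"
    using arg_cong[OF frame_comb_analysis[of v], of "\<lambda>z. \<mu> *\<^sub>R z"]
    by (simp add: frame_comb_def scaleR_sum_right mult_ac)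
  then have "frame_comb (\<lambda>k. (v \<bullet> svec k) ^ (d - 1)) = frame_comb (\<lambda>k. (3/4 * \<mu>) * (v \<bullet> svec k))"
    using assms(1) by (simp add: is_eigenpair_def Tapply_eq_frame_comb)
  from frame_comb_eq_imp_diff_const[OF this assms(2,3)] show ?thesis by simp
qed

lemma inner_normalized_frame_comb:
  assumes "v = (1 / norm (frame_comb y)) *\<^sub>R frame_comb y" "j \<in> {1..4}"
  shows "v \<bullet> svec j = (4 * y j - (\<Sum>k\<in>{1..4}. y k)) / (3 * norm (frame_comb y))"
  using assms by (simp add: inner_frame_comb_svec)

lemma eigenpair_of_affine_powers:
  assumes nz: "frame_comb y \<noteq> 0" and v: "v = (1 / norm (frame_comb y)) *\<^sub>R frame_comb y"
    and pow: "\<forall>j\<in>{1..4}. (v \<bullet> svec j) ^ (d - 1) = l * y j + \<kappa>" and d: "d \<ge> 1"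
  shows "norm v = 1" "is_eigenpair d v \<mu> \<longleftrightarrow> \<mu> = (\<Sum>k\<in>{1..4}. (v \<bullet> svec k) ^ d)"
proof -
  show unit: "norm v = 1" using nz v by simp
  have "Tapply d v = frame_comb (\<lambda>k. l * y k + \<kappa> * 1)"
    unfolding Tapply_eq_frame_comb by (rule frame_comb_cong) (use pow in auto)
  also have "\<dots> = (l * norm (frame_comb y)) *\<^sub>R v"
    using frame_comb_linear[of l y \<kappa> "\<lambda>k. 1"] nz v by (simp add: frame_comb_const)
  finally have eig: "is_eigenpair d v (l * norm (frame_comb y))"
    using unit by (auto simp: is_eigenpair_def)
  show "is_eigenpair d v \<mu> \<longleftrightarrow> \<mu> = (\<Sum>k\<in>{1..4}. (v \<bullet> svec k) ^ d)"
    using eigenvalue_eq_sum_power[OF unit _ d] eig by metis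
qed

lemma unit_frame_comb_affine:
  assumes "norm v = 1" "v = (3/4) *\<^sub>R frame_comb p"
    and "\<forall>j\<in>{1..4}. p j = \<beta> + t * y j" "t > 0"
  shows "v = (1 / norm (frame_comb y)) *\<^sub>R frame_comb y"
proof -
  have "frame_comb p = frame_comb (\<lambda>j. \<beta> * 1 + t * y j)"
    by (rule frame_comb_cong) (use assms(3) in auto)
  also have "\<dots> = t *\<^sub>R frame_comb y"
    using frame_comb_linear[of \<beta> "\<lambda>j. 1" t] by (simp add: frame_comb_const)
  finally have v: "v = (3/4 * t) *\<^sub>R frame_comb y" using assms(2) by simp
  moreover have "frame_comb y \<noteq> 0" using v assms(1) by auto
  moreover have "3/4 * t * norm (frame_comb y) = 1" using v assms(1,4) by simp
  ultimately show ?thesis by (simp add: field_simps)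
qed

section \<open>Face vectors\<close>

definition level_coeffs :: "nat set \<Rightarrow> nat set \<Rightarrow> real \<Rightarrow> real \<Rightarrow> nat \<Rightarrow> real" where
  "level_coeffs K1 K2 a b j = (if j \<in> K1 then a else if j \<in> K2 then b else 0)"

lemma sum_level_coeffs:
  assumes "K1 \<subseteq> {1..4}" "K2 \<subseteq> {1..4}" "K1 \<inter> K2 = {}"
  shows "(\<Sum>j\<in>{1..4}. f (level_coeffs K1 K2 a b j)) =
    real (card K1) * f a + real (card K2) * f b + (4 - real (card K1) - real (card K2)) * f 0"
proof -
  have "f (level_coeffs K1 K2 a b j) =
      f 0 + (if j \<in> K1 then f a - f 0 else 0) + (if j \<in> K2 then f b - f 0 else 0)" for j
    using assms(3) by (auto simp: level_coeffs_def)
  then have "(\<Sum>j\<in>{1..4}. f (level_coeffs K1 K2 a b j)) =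
      4 * f 0 + real (card K1) * (f a - f 0) + real (card K2) * (f b - f 0)"
    using assms(1,2) by (simp add: sum.distrib sum.If_cases Int_absorb1)
  then show ?thesis by (simp add: algebra_simps)
qed

lemma frame_comb_level_coeffs:
  assumes "K1 \<subseteq> {1..4}" "K2 \<subseteq> {1..4}" "K1 \<inter> K2 = {}"
  shows "frame_comb (level_coeffs K1 K2 a b) = a *\<^sub>R (\<Sum>k\<in>K1. svec k) + b *\<^sub>R (\<Sum>k\<in>K2. svec k)"
proof -
  have "frame_comb (level_coeffs K1 K2 a b)
      = (\<Sum>k\<in>{1..4}. (if k \<in> K1 then a *\<^sub>R svec k else 0) + (if k \<in> K2 then b *\<^sub>R svec k else 0))"
    unfolding frame_comb_def by (rule sum.cong) (use assms in \<open>auto simp: level_coeffs_def\<close>)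
  also have "\<dots> = (\<Sum>k\<in>K1. a *\<^sub>R svec k) + (\<Sum>k\<in>K2. b *\<^sub>R svec k)"
    using assms by (simp add: sum.distrib sum.If_cases Int_absorb1 Int_absorb2 inf_commute)
  finally show ?thesis by (simp add: scaleR_sum_right)
qed

definition face_vec :: "nat set \<Rightarrow> real^3" where
  "face_vec K = (1 / sqrt (real (card K) * (4 - real (card K)) / 3)) *\<^sub>R (\<Sum>k\<in>K. svec k)"

lemma face_vec_normalized:
  assumes "K \<subseteq> {1..4}"
  shows "frame_comb (level_coeffs K {} 1 0) = (\<Sum>k\<in>K. svec k)"
    and "(\<Sum>j\<in>{1..4}. level_coeffs K {} 1 0 j) = real (card K)"
    and "norm (frame_comb (level_coeffs K {} 1 0)) = sqrt (real (card K) * (4 - real (card K)) / 3)"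
    and "face_vec K = (1 / norm (frame_comb (level_coeffs K {} 1 0))) *\<^sub>R frame_comb (level_coeffs K {} 1 0)"
proof -
  show W: "frame_comb (level_coeffs K {} 1 0) = (\<Sum>k\<in>K. svec k)"
    using frame_comb_level_coeffs[OF assms, of "{}" 1 0] by simp
  show S: "(\<Sum>j\<in>{1..4}. level_coeffs K {} 1 0 j) = real (card K)"
    using sum_level_coeffs[OF assms, of "{}" "\<lambda>t. t" 1 0] by simp
  have "(\<Sum>j\<in>{1..4}. (level_coeffs K {} 1 0 j)\<^sup>2) = real (card K)"
    using sum_level_coeffs[OF assms, of "{}" "\<lambda>t. t\<^sup>2" 1 0] by simp
  then show N: "norm (frame_comb (level_coeffs K {} 1 0)) = sqrt (real (card K) * (4 - real (card K)) / 3)"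
    unfolding norm_eq_sqrt_inner inner_frame_comb_self S by (simp add: power2_eq_square algebra_simps)
  show "face_vec K = (1 / norm (frame_comb (level_coeffs K {} 1 0))) *\<^sub>R frame_comb (level_coeffs K {} 1 0)"
    unfolding N unfolding W face_vec_def ..
qed

text \<open>face_vec K has coordinates (4 - m)/(3 c) on K and -m/(3 c) off K, where m = |K| and
  c = sqrt (m (4 - m) / 3); face_eigenvalue is the sum of their d-th powers.\<close>
definition face_eigenvalue :: "nat \<Rightarrow> real \<Rightarrow> real" where
  "face_eigenvalue d m = (m * (4 - m) ^ d + (4 - m) * (- m) ^ d) / (3 * sqrt (m * (4 - m) / 3)) ^ d"

lemma face_vec_eigenpair_iff:
  assumes K: "K \<subseteq> {1..4}" "K \<noteq> {}" "card K \<le> 3" and d: "d \<ge> 1"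
  shows "norm (face_vec K) = 1"
    and "is_eigenpair d (face_vec K) \<mu> \<longleftrightarrow> \<mu> = face_eigenvalue d (real (card K))"
proof -
  define y where "y = level_coeffs K {} 1 0"
  define m where "m = real (card K)"
  define c where "c = sqrt (m * (4 - m) / 3)"
  have "finite K" using K(1) finite_subset by blast
  then have "1 \<le> m" "m \<le> 3" using K by (simp_all add: m_def Suc_le_eq card_gt_0_iff)
  then have c0: "c > 0" by (simp add: c_def)
  note F = face_vec_normalized[OF K(1), folded y_def m_def, folded c_def]
  have nz: "frame_comb y \<noteq> 0" using F(3) c0 by auto
  have coord: "face_vec K \<bullet> svec j = (4 * y j - m) / (3 * c)" if "j \<in> {1..4}" for j
    using inner_normalized_frame_comb[OF F(4) that] by (simp only: F(2,3))
  define \<alpha> where "\<alpha> = (4 - m) / (3 * c)"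
  define \<beta> where "\<beta> = - m / (3 * c)"
  have "\<forall>j\<in>{1..4}. (face_vec K \<bullet> svec j) ^ (d - 1) = (\<alpha> ^ (d - 1) - \<beta> ^ (d - 1)) * y j + \<beta> ^ (d - 1)"
    by (auto simp: coord y_def level_coeffs_def \<alpha>_def \<beta>_def)
  note E = eigenpair_of_affine_powers[OF nz F(4) this d]
  show "norm (face_vec K) = 1" by (rule E(1))
  have "(\<Sum>j\<in>{1..4}. (face_vec K \<bullet> svec j) ^ d)
      = (\<Sum>j\<in>{1..4}. (\<lambda>t. ((4 * t - m) / (3 * c)) ^ d) (level_coeffs K {} 1 0 j))"
    by (rule sum.cong) (auto simp: coord y_def)
  also have "\<dots> = m * ((4 - m) / (3 * c)) ^ d + (4 - m) * ((- m) / (3 * c)) ^ d"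
    using sum_level_coeffs[OF K(1), of "{}" "\<lambda>t. ((4 * t - m) / (3 * c)) ^ d" 1 0]
    by (simp add: m_def)
  also have "\<dots> = face_eigenvalue d m"
    by (simp only: face_eigenvalue_def c_def power_divide add_divide_distrib times_divide_eq_right)
  finally show "is_eigenpair d (face_vec K) \<mu> \<longleftrightarrow> \<mu> = face_eigenvalue d (real (card K))"
    using E(2) by (simp add: m_def)
qed

lemma face_eigenvalue_eq:
  fixes m :: real
  assumes "d \<ge> 1" "0 < m" "m < 4"
  shows "face_eigenvalue d m = ((4 - m) ^ (d - 1) + (- 1) ^ d * m ^ (d - 1)) /
           (3 powr (real d / 2) * (m * (4 - m)) powr (real d / 2 - 1))"
proof -
  define P where "P = m * (4 - m)"
  have P: "P > 0" using assms by (simp add: P_def)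
  obtain n where n: "d = Suc n" using assms(1) by (cases d) auto
  have pow: "(- m) ^ d = (- 1) ^ d * m * m ^ n" "(4 - m) ^ d = (4 - m) * (4 - m) ^ n"
    unfolding n by (simp_all add: power_minus[of m])
  have num: "m * (4 - m) ^ d + (4 - m) * (- m) ^ d = P * ((4 - m) ^ (d - 1) + (- 1) ^ d * m ^ (d - 1))"
    unfolding pow unfolding P_def n diff_Suc_1 by algebra
  have "3 * sqrt (P / 3) = sqrt (3 * P)"
    by (simp add: real_sqrt_mult real_sqrt_divide field_simps)
  then have "(3 * sqrt (P / 3)) ^ d = (3 * P) powr (real d / 2)"
    using P by (simp add: powr_half_sqrt[symmetric] powr_realpow[symmetric] powr_powr)
  also have "\<dots> = 3 powr (real d / 2) * P powr (real d / 2 - 1) * P"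
    using P by (simp add: powr_mult powr_diff)
  finally show ?thesis
    unfolding face_eigenvalue_def num P_def[symmetric] using P by simp
qed

lemma face_eigenvalue_odd:
  fixes m :: real
  assumes "odd d" "1 \<le> m" "m \<le> 3"
  shows "face_eigenvalue d m
       = ((4 - m) ^ (d - 1) - m ^ (d - 1)) / (3 powr (real d / 2) * (m * (4 - m)) powr (real d / 2 - 1))"
  using face_eigenvalue_eq[of d m] assms by (simp add: odd_pos Suc_le_eq)

lemma face_eigenvalue_even:
  fixes m :: real
  assumes "even d" "d \<ge> 2" "1 \<le> m" "m \<le> 3"
  shows "face_eigenvalue d m
       = ((4 - m) ^ (d - 1) + m ^ (d - 1)) / (3 ^ (d div 2) * (m * (4 - m)) ^ (d div 2 - 1))"
proof -
  obtain k where k: "d = 2 * k" "k \<ge> 1" using assms(1,2) by auto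
  have P: "m * (4 - m) > 0" using assms by simp
  have "(m * (4 - m)) powr (real d / 2 - 1) = (m * (4 - m)) powr real (k - 1)"
    using k by (simp add: of_nat_diff)
  also have "\<dots> = (m * (4 - m)) ^ (d div 2 - 1)" using powr_realpow[OF P, of "k - 1"] k by simp
  finally have pow: "3 powr (real d / 2) = 3 ^ (d div 2)"
    "(m * (4 - m)) powr (real d / 2 - 1) = (m * (4 - m)) ^ (d div 2 - 1)"
    using k by (simp_all add: powr_realpow)
  show ?thesis
    using face_eigenvalue_eq[of d m] assms unfolding pow by simp
qed

section \<open>Odd degree\<close>

lemma odd_power_strict_mono:
  fixes a b :: real
  assumes "odd n" "a < b"
  shows "a ^ n < b ^ n"
proof -
  have "a ^ n \<le> b ^ n" using power_mono_odd[OF assms(1), of a b] assms(2) by simp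
  moreover have "a ^ n \<noteq> b ^ n"
  proof
    assume "a ^ n = b ^ n"
    then have "root n (a ^ n) = root n (b ^ n)" by simp
    then show False using odd_real_root_power_cancel[OF assms(1)] assms(2) by simp
  qed
  ultimately show ?thesis by simp
qed

lemma even_power_minus_linear_no_three_roots:
  fixes x1 x2 x3 l C :: real
  assumes "odd d" "d \<ge> 3" "x1 < x2" "x2 < x3"
    and "x1 ^ (d - 1) - l * x1 = C" "x2 ^ (d - 1) - l * x2 = C" "x3 ^ (d - 1) - l * x3 = C"
  shows False
proof -
  define q where "q = (\<lambda>x::real. x ^ (d - 1) - l * x)"
  define q' where "q' = (\<lambda>x::real. real (d - 1) * x ^ (d - 2) - l)"
  have der: "DERIV q x :> q' x" for x
    unfolding q_def q'_def by (auto intro!: derivative_eq_intros simp: diff_diff_left numeral_2_eq_2)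
  obtain z1 where z1: "x1 < z1" "z1 < x2" "q x2 - q x1 = (x2 - x1) * q' z1"
    using MVT2[OF assms(3), of q q'] der by blast
  obtain z2 where z2: "x2 < z2" "z2 < x3" "q x3 - q x2 = (x3 - x2) * q' z2"
    using MVT2[OF assms(4), of q q'] der by blast
  have "q' z1 = 0" "q' z2 = 0" using z1 z2 assms(3-7) by (simp_all add: q_def)
  moreover have "z1 ^ (d - 2) < z2 ^ (d - 2)"
    using z1 z2 assms(1,2) by (intro odd_power_strict_mono) auto
  ultimately show False
    using mult_strict_left_mono[of "z1 ^ (d - 2)" "z2 ^ (d - 2)" "real d - 1"] assms(2)
    by (simp add: q'_def)
qed

lemma finite_obtain_argmin_argmax:
  fixes f :: "'a \<Rightarrow> 'b::linorder"
  assumes "finite A" "A \<noteq> {}"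
  obtains jmax jmin where "jmax \<in> A" "jmin \<in> A" "\<forall>j\<in>A. f jmin \<le> f j \<and> f j \<le> f jmax"
proof -
  have fin: "finite (f ` A)" "f ` A \<noteq> {}" using assms by auto
  obtain jmax where "jmax \<in> A" "f jmax = Max (f ` A)" using Max_in[OF fin] by auto
  moreover obtain jmin where "jmin \<in> A" "f jmin = Min (f ` A)" using Min_in[OF fin] by auto
  ultimately show ?thesis using that fin by auto
qed

lemma card_le_3_if_missing:
  assumes "K \<subseteq> {1..4::nat}" "j \<in> {1..4}" "j \<notin> K"
  shows "card K \<le> 3"
proof -
  have "K \<subset> {1..4}" using assms by auto
  then show ?thesis using psubset_card_mono[of "{1..4::nat}" K] by simp
qed

lemma card_pos_if_nonempty_face: "K \<subseteq> {1..4::nat} \<Longrightarrow> K \<noteq> {} \<Longrightarrow> 0 < card K"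
  using finite_subset[of K "{1..4}"] by (simp add: card_gt_0_iff)

lemma odd_eigenvector_is_face_vec:
  assumes d: "odd d" "d \<ge> 3" and unit: "norm v = 1" and eig: "is_eigenpair d v \<mu>"
  shows "\<exists>K. K \<subseteq> {1..4} \<and> K \<noteq> {} \<and> card K \<le> 3 \<and> v = face_vec K"
proof -
  define p where "p = (\<lambda>k. v \<bullet> svec k)"
  obtain jmax jmin where j: "jmax \<in> {1..4}" "jmin \<in> {1..4}"
    "\<forall>j\<in>{1..4}. p jmin \<le> p j \<and> p j \<le> p jmax"
    using finite_obtain_argmin_argmax[of "{1..4::nat}" p] by auto
  define \<alpha> where "\<alpha> = p jmax"
  define \<beta> where "\<beta> = p jmin"
  have level: "p i ^ (d - 1) - (3/4 * \<mu>) * p i = p j ^ (d - 1) - (3/4 * \<mu>) * p j"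
    if "i \<in> {1..4}" "j \<in> {1..4}" for i j
    using eigenpair_imp_level_const[OF eig that] by (simp add: p_def)
  have two_values: "p j = \<alpha> \<or> p j = \<beta>" if "j \<in> {1..4}" for j
  proof (rule ccontr)
    assume "\<not> ?thesis"
    then have "p jmin < p j" "p j < p jmax" using j that by (auto simp: \<alpha>_def \<beta>_def less_le)
    from even_power_minus_linear_no_three_roots[OF d this level[OF j(2) j(1)] level[OF that j(1)] refl]
    show False .
  qed
  have "\<beta> < \<alpha>"
  proof (rule ccontr)
    assume "\<not> \<beta> < \<alpha>"
    then have all: "p j = \<beta>" if "j \<in> {1..4}" for j using j that by (force simp: \<alpha>_def \<beta>_def)
    moreover have "{1..4::nat} = {1,2,3,4}" by auto
    ultimately have "4 * \<beta> = 0" using sum_inner_svec[of v] by (simp add: p_def)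
    moreover have "(\<Sum>k\<in>{1..4}. (p k)\<^sup>2) = 4/3"
      using sum_inner_svec_sq[of v] unit by (simp add: p_def dot_square_norm)
    ultimately show False using all by simp
  qed
  define K where "K = {j \<in> {1..4}. p j = \<alpha>}"
  have K: "K \<subseteq> {1..4}" "jmax \<in> K" "jmin \<notin> K"
    using j \<open>\<beta> < \<alpha>\<close> by (auto simp: K_def \<alpha>_def \<beta>_def)
  have "\<forall>j\<in>{1..4}. p j = \<beta> + (\<alpha> - \<beta>) * level_coeffs K {} 1 0 j"
  proof
    fix j :: nat assume "j \<in> {1..4}"
    then show "p j = \<beta> + (\<alpha> - \<beta>) * level_coeffs K {} 1 0 j"
      using two_values[of j] by (auto simp: level_coeffs_def K_def)
  qed
  then have "v = face_vec K"
    unfolding face_vec_normalized(4)[OF K(1)]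
    by (rule unit_frame_comb_affine[OF unit frame_comb_analysis[of v, folded p_def]])
      (use \<open>\<beta> < \<alpha>\<close> in simp)
  moreover have "card K \<le> 3" using card_le_3_if_missing[OF K(1) j(2) K(3)] .
  ultimately show ?thesis using K by blast
qed

lemma odd_eigenpair_iff:
  assumes d: "odd d" "d \<ge> 3" and unit: "norm v = 1"
  shows "is_eigenpair d v \<mu> \<longleftrightarrow>
         (\<exists>K. K \<subseteq> {1..4} \<and> K \<noteq> {} \<and> card K \<le> 3 \<and> v = face_vec K \<and>
           \<mu> = ((4 - real (card K)) ^ (d - 1) - real (card K) ^ (d - 1)) /
               (3 powr (real d / 2) * (real (card K) * (4 - real (card K))) powr (real d / 2 - 1)))"
proof -
  have eigenvalue: "is_eigenpair d (face_vec K) \<mu> \<longleftrightarrow>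
      \<mu> = ((4 - real (card K)) ^ (d - 1) - real (card K) ^ (d - 1)) /
          (3 powr (real d / 2) * (real (card K) * (4 - real (card K))) powr (real d / 2 - 1))"
    if K: "K \<subseteq> {1..4}" "K \<noteq> {}" "card K \<le> 3" for K
  proof -
    have "1 \<le> real (card K)" using card_pos_if_nonempty_face[OF K(1,2)] by simp
    then show ?thesis
      using face_vec_eigenpair_iff(2)[OF K, of d] face_eigenvalue_odd[OF d(1)] K(3) d by simp
  qed
  show ?thesis
    using odd_eigenvector_is_face_vec[OF d unit, of \<mu>] eigenvalue by blast
qed

lemma odd_face_eigenvalue_eq_0_iff:
  assumes d: "odd d" "d \<ge> 3" and m: "0 < m" "m \<le> (3::nat)"
  shows "((4 - real m) ^ (d - 1) - real m ^ (d - 1)) /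
           (3 powr (real d / 2) * (real m * (4 - real m)) powr (real d / 2 - 1)) = 0
         \<longleftrightarrow> m = 2"
proof -
  have "(3::real) ^ (d - 1) > 1" using d by (intro one_less_power) auto
  moreover have "m = 1 \<or> m = 2 \<or> m = 3" using m by auto
  ultimately show ?thesis by auto
qed

lemma odd_eigenpair_zero_iff:
  assumes d: "odd d" "d \<ge> 3" and unit: "norm v = 1"
  shows "is_eigenpair d v 0 \<longleftrightarrow> (\<exists>K. K \<subseteq> {1..4} \<and> card K = 2 \<and> v = face_vec K)"
proof
  assume "is_eigenpair d v 0"
  then obtain K where K: "K \<subseteq> {1..4}" "K \<noteq> {}" "card K \<le> 3" "v = face_vec K"
    and zero: "((4 - real (card K)) ^ (d - 1) - real (card K) ^ (d - 1)) /
      (3 powr (real d / 2) * (real (card K) * (4 - real (card K))) powr (real d / 2 - 1)) = 0"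
    unfolding odd_eigenpair_iff[OF d unit] by metis
  then have "card K = 2"
    using odd_face_eigenvalue_eq_0_iff[OF d card_pos_if_nonempty_face[OF K(1,2)] K(3)] zero by blast
  then show "\<exists>K. K \<subseteq> {1..4} \<and> card K = 2 \<and> v = face_vec K" using K by blast
next
  assume "\<exists>K. K \<subseteq> {1..4} \<and> card K = 2 \<and> v = face_vec K"
  then obtain K where K: "K \<subseteq> {1..4}" "card K = 2" "v = face_vec K" by blast
  then have "K \<noteq> {}" by auto
  then show "is_eigenpair d v 0"
    unfolding odd_eigenpair_iff[OF d unit] using K odd_face_eigenvalue_eq_0_iff[OF d, of 2]
    by (intro exI[of _ K]) simp
qed

lemma sum_svec_eq_0: "svec 1 + svec 2 + svec 3 + svec 4 = 0"
proof -
  have "{1..4::nat} = {1,2,3,4}" by auto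
  then show ?thesis using frame_comb_const[of 1] by (simp add: frame_comb_def add.assoc)
qed

lemma face_vec_pair:
  assumes "i \<noteq> j"
  shows "face_vec {i, j} = (1 / sqrt (4/3)) *\<^sub>R (svec i + svec j)"
  using assms by (simp add: face_vec_def)

text \<open>Complementary two-element faces give opposite vectors, since the frame sums to 0.\<close>
lemma pair_face_vecs:
  defines "w i \<equiv> (1 / sqrt (4/3)) *\<^sub>R (svec 1 + svec i)"
  shows "(\<exists>K. K \<subseteq> {1..4} \<and> card K = 2 \<and> v = face_vec K) \<longleftrightarrow>
         v \<in> {w 2, w 3, w 4, - w 2, - w 3, - w 4}"
proof -
  have "svec 3 + svec 4 = - (svec 1 + svec 2)" "svec 2 + svec 4 = - (svec 1 + svec 3)"
    "svec 2 + svec 3 = - (svec 1 + svec 4)"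
    using sum_svec_eq_0 by (simp_all add: algebra_simps eq_neg_iff_add_eq_0)
  then have faces: "face_vec {1,2} = w 2" "face_vec {1,3} = w 3" "face_vec {1,4} = w 4"
      "face_vec {3,4} = - w 2" "face_vec {2,4} = - w 3" "face_vec {2,3} = - w 4"
    by (simp_all only: face_vec_pair w_def scaleR_minus_right)
  have pairs: "K \<subseteq> {1..4} \<and> card K = 2 \<longleftrightarrow>
      K \<in> {{1,2}, {1,3}, {1,4}, {3,4}, {2,4}, {2,3}}" for K :: "nat set"
  proof
    assume "K \<subseteq> {1..4} \<and> card K = 2"
    then obtain x y where K: "K = {x, y}" "x \<noteq> y" and "x \<in> {1..4}" "y \<in> {1..4}"
      by (auto simp: card_2_iff)
    then have "x \<in> {1,2,3,4}" "y \<in> {1,2,3,4}" by auto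
    then show "K \<in> {{1,2}, {1,3}, {1,4}, {3,4}, {2,4}, {2,3}}"
      using K by (elim insertE emptyE) (simp_all add: insert_commute)
  qed auto
  have "(\<exists>K. K \<subseteq> {1..4} \<and> card K = 2 \<and> v = face_vec K) \<longleftrightarrow>
        (\<exists>K\<in>{{1,2}, {1,3}, {1,4}, {3,4}, {2,4}, {2,3}}. v = face_vec K)"
    by (simp only: conj_assoc[symmetric] pairs Bex_def)
  also have "\<dots> \<longleftrightarrow> v \<in> {w 2, w 3, w 4, - w 2, - w 3, - w 4}"
    by (simp only: faces bex_simps insert_iff empty_iff simp_thms)
  finally show ?thesis .
qed

lemma orthonormal_pair_sums:
  defines "w i \<equiv> (1 / sqrt (4/3)) *\<^sub>R (svec 1 + svec i)"
  assumes "i \<in> {2, 3, 4}" "j \<in> {2, 3, 4}"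
  shows "w i \<bullet> w j = (if i = j then 1 else 0)"
  using assms by (auto simp: w_def inner_add_left inner_add_right inner_svec real_sqrt_divide field_simps)

lemma independent_pair_sums:
  defines "w i \<equiv> (1 / sqrt (4/3)) *\<^sub>R (svec 1 + svec i)"
  shows "independent {w 2, w 3, w 4} \<and> card {w 2, w 3, w 4} = 3"
proof -
  have orth: "w 2 \<bullet> w 3 = 0" "w 2 \<bullet> w 4 = 0" "w 3 \<bullet> w 4 = 0"
    and unit: "w 2 \<bullet> w 2 = 1" "w 3 \<bullet> w 3 = 1" "w 4 \<bullet> w 4 = 1"
    using orthonormal_pair_sums[of i j for i j :: nat] unfolding w_def by simp_all
  then have "w 2 \<noteq> w 3" "w 2 \<noteq> w 4" "w 3 \<noteq> w 4" by auto
  then have "card {w 2, w 3, w 4} = 3" by simp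
  moreover have "independent {w 2, w 3, w 4}"
  proof (rule pairwise_orthogonal_independent)
    show "pairwise orthogonal {w 2, w 3, w 4}"
      using orth by (auto simp: pairwise_def orthogonal_def inner_commute)
    show "0 \<notin> {w 2, w 3, w 4}"
      using unit by auto
  qed
  ultimately show ?thesis by simp
qed

section \<open>The switch point of g(s)/s\<close>

text \<open>For even d, s^2 times the derivative of g(s)/s is gquot_numer d (4 s - 1).\<close>
definition gquot_numer :: "nat \<Rightarrow> real \<Rightarrow> real" where
  "gquot_numer d t = (real d - 2) * t ^ (d - 1) + (real d - 1) * t ^ (d - 2) - 1"

lemma gquot_numer_neg:
  assumes "even d" "d \<ge> 4" "-1 < t" "t \<le> 0"
  shows "gquot_numer d t < 0"
proof -
  define n where "n = d - 2"
  define u where "u = - t"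
  have u: "0 \<le> u" "u < 1" using assms by (auto simp: u_def)
  have n2: "n \<ge> 2" "even n" using assms by (auto simp: n_def)
  have tn: "t^(d-1) = - (u * u^n)" "t^(d-2) = u^n"
  proof -
    have "d - 1 = Suc n" using assms by (simp add: n_def)
    then show "t^(d-1) = - (u * u^n)" using n2 by (simp add: u_def)
    show "t^(d-2) = u^n" using n2 by (simp add: u_def n_def)
  qed
  have numer: "gquot_numer d t = u^n * ((real n + 1) - real n * u) - 1"
    unfolding gquot_numer_def tn using assms by (simp add: n_def of_nat_diff algebra_simps)
  show ?thesis
  proof (cases "u = 0")
    case True then show ?thesis using n2 by (simp add: numer power_0_left)
  next
    case False
    then have u0: "u > 0" using u by simp
    \<comment> \<open>Bernoulli's inequality for 1/u gives u^n ((n + 1) - n u) < 1.\<close>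
    define w where "w = 1 / u"
    have w1: "w > 1" using u u0 by (simp add: w_def)
    have B: "1 + real n * (w - 1) \<le> w^n"
      using Bernoulli_inequality[of "w - 1" n] w1 by simp
    have key: "(real n + 1) - real n * u < 1 + real n * (w - 1)"
    proof -
      have "real n * (w + u - 2) > 0"
      proof -
        have "w + u - 2 = (w - 1)^2 / w" using w1 u0 by (simp add: w_def field_simps power2_eq_square)
        moreover have "(w - 1)^2 / w > 0" using w1 by simp
        moreover have "real n > 0" using n2 by simp
        ultimately show ?thesis by (metis mult_pos_pos)
      qed
      then show ?thesis by (simp add: algebra_simps)
    qed
    have "u^n * ((real n + 1) - real n * u) < u^n * w^n"
      using key B u0 by (intro mult_strict_left_mono) auto
    also have "u^n * w^n = 1" using u0 by (simp add: w_def power_one_over[symmetric] power_mult_distrib[symmetric])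
    finally show ?thesis by (simp add: numer)
  qed
qed

lemma gquot_numer_strict_mono:
  assumes "d \<ge> 4" "0 \<le> s" "s < t"
  shows "gquot_numer d s < gquot_numer d t"
proof -
  have "s^(d-1) < t^(d-1)" using assms by (intro power_strict_mono) auto
  moreover have "s^(d-2) < t^(d-2)" using assms by (intro power_strict_mono) auto
  moreover have "real d - 2 > 0" "real d - 1 > 0" using assms by auto
  ultimately have "(real d - 2) * s^(d-1) < (real d - 2) * t^(d-1)"
    "(real d - 1) * s^(d-2) < (real d - 1) * t^(d-2)"
    by (intro mult_strict_left_mono; simp)+
  then show ?thesis unfolding gquot_numer_def by linarith
qed

lemma three_pow_ge_linear: "4 * k + 3 \<le> (3::nat)^(k+1)"
  by (induction k) auto

lemma gquot_numer_third_nonpos: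
  assumes "d \<ge> 4"
  shows "gquot_numer d (1/3) \<le> 0"
proof -
  obtain k where k: "d = k + 4" using assms by (metis add.commute le_Suc_ex)
  have "4 * (k + 2) + 3 \<le> (3::nat)^(k+3)" using three_pow_ge_linear[of "k+2"] by (simp add: algebra_simps power_add)
  then have "real (4 * (k + 2) + 3) \<le> real ((3::nat)^(k+3))" by (simp only: of_nat_le_iff)
  then have b: "4 * (real k + 2) + 3 \<le> 27 * 3^k" by (simp add: power_add)
  have p: "(1/3::real)^(k+3) = 1/(27*3^k)" "(1/3::real)^(k+2) = 1/(9*3^k)"
    by (simp_all add: power_add power_divide)
  have "gquot_numer d (1/3) = (real k + 2) * (1/(27*3^k)) + (real k + 3) * (1/(9*3^k)) - 1"
    unfolding gquot_numer_def k by (simp add: p[symmetric] numeral_eq_Suc add.commute)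
  also have "\<dots> = (4 * (real k + 2) + 3) / (27 * 3^k) - 1" by (simp add: field_simps)
  also have "\<dots> \<le> 0" using b by (simp add: field_simps)
  finally show ?thesis .
qed

lemma gquot_numer_root:
  assumes "even d" "d \<ge> 4"
  shows "\<exists>t0. 1/3 \<le> t0 \<and> t0 < 1 \<and> gquot_numer d t0 = 0"
proof -
  have c: "continuous_on {1/3..1} (gquot_numer d)" unfolding gquot_numer_def by (intro continuous_intros)
  have n1: "gquot_numer d 1 > 0" using assms by (simp add: gquot_numer_def)
  obtain t0 where t0: "1/3 \<le> t0" "t0 \<le> 1" "gquot_numer d t0 = 0"
    using IVT'[of "gquot_numer d" "1/3" 0 1, OF gquot_numer_third_nonpos[OF assms(2)] _ _ c] n1 by auto
  have "t0 \<noteq> 1" using t0 n1 by auto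
  then show ?thesis using t0 by auto
qed

lemma gfun_even: "even d \<Longrightarrow> d \<ge> 2 \<Longrightarrow> gfun d s = (4 * s - 1) ^ (d - 1) + 1"
  by (simp add: gfun_def)

lemma gquot_numer_alt:
  assumes "d \<ge> 2"
  shows "real (d - 1) * t ^ (d - 2) * (t + 1) - t ^ (d - 1) - 1 = gquot_numer d t"
proof -
  have e: "d - 1 = Suc (d - 2)" using assms by simp
  have "t^(d-1) = t * t^(d-2)" unfolding e by simp
  then show ?thesis unfolding gquot_numer_def using assms by (simp add: of_nat_diff algebra_simps)
qed

lemma has_real_derivative_gquot:
  assumes "d \<ge> 2" "s > 0"
  shows "((\<lambda>s. ((4 * s - 1) ^ (d - 1) + 1) / s) has_real_derivative gquot_numer d (4 * s - 1) / s\<^sup>2) (at s)"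
proof -
  have "((\<lambda>s. ((4 * s - 1) ^ (d - 1) + 1) / s) has_real_derivative
      ((real (d - 1) * (4 * s - 1) ^ (d - 1 - 1) * (4 * 1 - 0) + 0) * s - ((4 * s - 1) ^ (d - 1) + 1) * 1)
        / (s * s)) (at s)"
    using assms by (intro derivative_eq_intros refl) auto
  moreover have "(real (d - 1) * (4 * s - 1) ^ (d - 1 - 1) * (4 * 1 - 0) + 0) * s - ((4 * s - 1) ^ (d - 1) + 1) * 1
      = gquot_numer d (4 * s - 1)"
    using gquot_numer_alt[OF assms(1), of "4 * s - 1"] by (simp add: algebra_simps numeral_2_eq_2)
  ultimately show ?thesis by (simp add: power2_eq_square)
qed

definition switch_point :: "nat \<Rightarrow> real \<Rightarrow> bool" where
  "switch_point d s \<longleftrightarrow> 1/3 \<le> s \<and> s < 1/2 \<and>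
     (\<forall>x\<in>{0<..s}. \<forall>y\<in>{0<..s}. x < y \<longrightarrow> gfun d y / y < gfun d x / x) \<and>
     (\<forall>x\<in>{s..}. \<forall>y\<in>{s..}. x < y \<longrightarrow> gfun d x / x < gfun d y / y)"

lemma switch_point_level_pair:
  assumes "switch_point d s" "0 < x" "x < y" "gfun d x / x = gfun d y / y"
  shows "x \<le> s" "s < y"
proof -
  show "x \<le> s"
  proof (rule ccontr)
    assume "\<not> x \<le> s"
    then have "gfun d x / x < gfun d y / y" using assms(1,3) unfolding switch_point_def by auto
    then show False using assms(4) by simp
  qed
  show "s < y"
  proof (rule ccontr)
    assume "\<not> s < y"
    then have "gfun d y / y < gfun d x / x" using assms(1-3) unfolding switch_point_def by auto
    then show False using assms(4) by simp
  qed
qed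

lemma switch_point_no_three_levels:
  assumes "switch_point d s" "0 < x" "x < y" "y < z"
    and "gfun d x / x = gfun d y / y" "gfun d y / y = gfun d z / z"
  shows False
  using switch_point_level_pair(2)[OF assms(1,2,3,5)] switch_point_level_pair(1)[OF assms(1) _ assms(4,6)]
    assms(2,3) by simp

lemma switch_point_unique:
  assumes "switch_point d s1" "switch_point d s2"
  shows "s1 = s2"
proof -
  have False if "switch_point d s" "switch_point d s'" "s < s'" for s s'
  proof -
    have "0 < s" using that(1) by (simp add: switch_point_def)
    then have "gfun d s' / s' < gfun d s / s" using that(2,3) unfolding switch_point_def by auto
    moreover have "gfun d s / s < gfun d s' / s'" using that(1,3) unfolding switch_point_def by auto
    ultimately show False by simp
  qed
  then show ?thesis using assms by (cases s1 s2 rule: linorder_cases) auto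
qed

lemma gquot_numer_sign_change:
  assumes "even d" "d \<ge> 4"
  obtains s0 where "1/3 \<le> s0" "s0 < 1/2"
    "\<And>z. 0 < z \<Longrightarrow> z < s0 \<Longrightarrow> gquot_numer d (4 * z - 1) < 0"
    "\<And>z. s0 < z \<Longrightarrow> gquot_numer d (4 * z - 1) > 0"
proof -
  obtain t0 where t0: "1/3 \<le> t0" "t0 < 1" "gquot_numer d t0 = 0"
    using gquot_numer_root[OF assms] by blast
  define s0 where "s0 = (1 + t0) / 4"
  show thesis
  proof (rule that)
    show "1/3 \<le> s0" "s0 < 1/2" using t0 by (auto simp: s0_def)
  next
    fix z assume z: "0 < z" "z < s0"
    show "gquot_numer d (4 * z - 1) < 0"
    proof (cases "4 * z - 1 \<le> 0")
      case True
      then show ?thesis using gquot_numer_neg[OF assms, of "4 * z - 1"] z by simp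
    next
      case False
      then have "gquot_numer d (4 * z - 1) < gquot_numer d t0"
        using z assms by (intro gquot_numer_strict_mono) (auto simp: s0_def)
      then show ?thesis using t0 by simp
    qed
  next
    fix z assume "s0 < z"
    then have "gquot_numer d t0 < gquot_numer d (4 * z - 1)"
      using assms t0 by (intro gquot_numer_strict_mono) (auto simp: s0_def)
    then show "gquot_numer d (4 * z - 1) > 0" using t0 by simp
  qed
qed

lemma switch_point_exists:
  assumes "even d" "d \<ge> 4"
  shows "\<exists>s. switch_point d s"
proof -
  obtain s0 where s0: "1/3 \<le> s0" "s0 < 1/2"
    and neg: "\<And>z. 0 < z \<Longrightarrow> z < s0 \<Longrightarrow> gquot_numer d (4 * z - 1) < 0"
    and pos: "\<And>z. s0 < z \<Longrightarrow> gquot_numer d (4 * z - 1) > 0"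
    using gquot_numer_sign_change[OF assms] by blast
  define f where "f = (\<lambda>s::real. ((4 * s - 1) ^ (d - 1) + 1) / s)"
  have "gfun d s / s = f s" for s using assms by (simp add: f_def gfun_even)
  moreover have der: "(f has_real_derivative gquot_numer d (4 * s - 1) / s\<^sup>2) (at s)" if "s > 0" for s
    unfolding f_def using has_real_derivative_gquot[OF _ that] assms by simp
  moreover have cont: "continuous_on {x..y} f" if "x > 0" for x y
    unfolding f_def using that by (intro continuous_intros) auto
  moreover have "f y < f x" if "0 < x" "x < y" "y \<le> s0" for x y
  proof (rule DERIV_neg_imp_decreasing_open[OF that(2) _ cont[OF that(1)]])
    fix z assume "x < z" "z < y"
    then show "\<exists>D. (f has_real_derivative D) (at z) \<and> D < 0"
      using der[of z] neg[of z] that by (intro exI[of _ "gquot_numer d (4 * z - 1) / z\<^sup>2"])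
        (auto simp: divide_neg_pos)
  qed
  moreover have "f x < f y" if "s0 \<le> x" "x < y" for x y
  proof (rule DERIV_pos_imp_increasing_open[OF that(2) _ cont])
    fix z assume "x < z" "z < y"
    then show "\<exists>D. (f has_real_derivative D) (at z) \<and> D > 0"
      using der[of z] pos[of z] that s0 by (intro exI[of _ "gquot_numer d (4 * z - 1) / z\<^sup>2"]) auto
  qed (use that s0 in auto)
  ultimately have "switch_point d s0"
    using s0 unfolding switch_point_def by auto
  then show ?thesis by blast
qed

lemma s_star_switch_point:
  assumes "even d" "d \<ge> 4"
  shows "switch_point d (s_star d)"
proof -
  obtain s where s: "switch_point d s" using switch_point_exists[OF assms] by blast
  have e: "s_star d = (THE s. switch_point d s)" unfolding s_star_def switch_point_def by simp
  have "s_star d = s"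
    unfolding e by (rule the_equality[where P="switch_point d", OF s]) (use switch_point_unique s in blast)
  then show ?thesis using s by simp
qed

section \<open>Even degree\<close>

definition two_face_vec :: "nat set \<Rightarrow> nat set \<Rightarrow> real \<Rightarrow> real \<Rightarrow> real^3" where
  "two_face_vec K1 K2 a b =
     (1 / sqrt ((4 * a\<^sup>2 * real (card K1) + 4 * b\<^sup>2 * real (card K2) - 1) / 3)) *\<^sub>R
       (a *\<^sub>R (\<Sum>k\<in>K1. svec k) + b *\<^sub>R (\<Sum>k\<in>K2. svec k))"

lemma two_face_vec_normalized:
  assumes K: "K1 \<subseteq> {1..4}" "K2 \<subseteq> {1..4}" "K1 \<inter> K2 = {}"
    and sum: "real (card K1) * a + real (card K2) * b = 1"
  shows "(\<Sum>j\<in>{1..4}. level_coeffs K1 K2 a b j) = 1"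
    and "norm (frame_comb (level_coeffs K1 K2 a b))
      = sqrt ((4 * a\<^sup>2 * real (card K1) + 4 * b\<^sup>2 * real (card K2) - 1) / 3)"
    and "two_face_vec K1 K2 a b = (1 / norm (frame_comb (level_coeffs K1 K2 a b))) *\<^sub>R
      frame_comb (level_coeffs K1 K2 a b)"
proof -
  show S: "(\<Sum>j\<in>{1..4}. level_coeffs K1 K2 a b j) = 1"
    using sum_level_coeffs[OF K, of "\<lambda>t. t" a b] sum by simp
  have "(\<Sum>j\<in>{1..4}. (level_coeffs K1 K2 a b j)\<^sup>2) = real (card K1) * a\<^sup>2 + real (card K2) * b\<^sup>2"
    using sum_level_coeffs[OF K, of "\<lambda>t. t\<^sup>2" a b] by simp
  then show N: "norm (frame_comb (level_coeffs K1 K2 a b))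
      = sqrt ((4 * a\<^sup>2 * real (card K1) + 4 * b\<^sup>2 * real (card K2) - 1) / 3)"
    unfolding norm_eq_sqrt_inner inner_frame_comb_self S by (simp add: algebra_simps)
  show "two_face_vec K1 K2 a b = (1 / norm (frame_comb (level_coeffs K1 K2 a b))) *\<^sub>R
      frame_comb (level_coeffs K1 K2 a b)"
    unfolding N unfolding frame_comb_level_coeffs[OF K] two_face_vec_def ..
qed

text \<open>For even d, (4 y - 1)^(d-1) = g(y) - 1 is an affine function of y on the three
  coefficient values 0, a, b exactly when g(a)/a = g(b)/b.\<close>
lemma two_face_vec_eigenpair_iff:
  assumes d: "even d" "d \<ge> 2"
    and K: "K1 \<subseteq> {1..4}" "K2 \<subseteq> {1..4}" "K1 \<inter> K2 = {}" "K1 \<noteq> {}" "card (K1 \<union> K2) \<le> 3"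
    and ab: "0 < a" "0 < b" and sum: "real (card K1) * a + real (card K2) * b = 1"
    and level: "gfun d a / a = gfun d b / b"
  shows "norm (two_face_vec K1 K2 a b) = 1"
    and "is_eigenpair d (two_face_vec K1 K2 a b) \<mu> \<longleftrightarrow>
      \<mu> = (real (card K1) * (4 * a - 1) ^ d + real (card K2) * (4 * b - 1) ^ d
             + 4 - real (card K1) - real (card K2)) /
          (3 ^ (d div 2) * (4 * a\<^sup>2 * real (card K1) + 4 * b\<^sup>2 * real (card K2) - 1) ^ (d div 2))"
    (is "_ \<longleftrightarrow> \<mu> = ?eigenvalue")
proof -
  define y where "y = level_coeffs K1 K2 a b"
  define v where "v = two_face_vec K1 K2 a b"
  define Q where "Q = 4 * a\<^sup>2 * real (card K1) + 4 * b\<^sup>2 * real (card K2) - 1"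
  define c where "c = norm (frame_comb y)"
  note F = two_face_vec_normalized[OF K(1-3) sum, folded y_def v_def Q_def]
  have "K1 \<union> K2 \<noteq> {1..4}" using K(5) by auto
  then obtain j0 where j0: "j0 \<in> {1..4}" "j0 \<notin> K1 \<union> K2" using K(1,2) by blast
  obtain k1 where k1: "k1 \<in> K1" using K(4) by blast
  have nz: "frame_comb y \<noteq> 0"
  proof
    assume "frame_comb y = 0"
    from frame_comb_eq_zero_imp_const[OF this, of k1 j0] show False
      using k1 K(1,3) j0 ab by (auto simp: y_def level_coeffs_def)
  qed
  then have c0: "c > 0" by (simp add: c_def)
  have coord: "v \<bullet> svec j = (4 * y j - 1) / (3 * c)" if "j \<in> {1..4}" for j
    using inner_normalized_frame_comb[OF F(3) that] by (simp only: F(1) c_def)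
  define \<Lambda> where "\<Lambda> = gfun d a / a"
  have pow: "(4 * y j - 1) ^ (d - 1) = \<Lambda> * y j - 1" if "j \<in> {1..4}" for j
  proof -
    have "\<Lambda> * a = gfun d a" using ab by (simp add: \<Lambda>_def)
    moreover have "\<Lambda> * b = gfun d b" using ab by (simp add: \<Lambda>_def level)
    ultimately show ?thesis using d K(3) by (auto simp: y_def level_coeffs_def gfun_def)
  qed
  have affine: "\<forall>j\<in>{1..4}. (v \<bullet> svec j) ^ (d - 1) = (\<Lambda> / (3 * c) ^ (d - 1)) * y j + (- 1 / (3 * c) ^ (d - 1))"
  proof
    fix j :: nat assume j: "j \<in> {1..4}"
    have "(v \<bullet> svec j) ^ (d - 1) = (4 * y j - 1) ^ (d - 1) / (3 * c) ^ (d - 1)"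
      by (simp add: coord[OF j] power_divide)
    also have "\<dots> = (\<Lambda> * y j - 1) / (3 * c) ^ (d - 1)" by (simp only: pow[OF j])
    finally show "(v \<bullet> svec j) ^ (d - 1) = (\<Lambda> / (3 * c) ^ (d - 1)) * y j + (- 1 / (3 * c) ^ (d - 1))"
      by (simp add: diff_divide_distrib)
  qed
  have "d \<ge> 1" using d by simp
  note E = eigenpair_of_affine_powers[OF nz F(3) affine this]
  show "norm (two_face_vec K1 K2 a b) = 1" using E(1) by (simp add: v_def)
  have "(\<Sum>j\<in>{1..4}. (v \<bullet> svec j) ^ d) = (\<Sum>j\<in>{1..4}. (\<lambda>t. ((4 * t - 1) / (3 * c)) ^ d) (y j))"
    by (rule sum.cong) (auto simp: coord)
  also have "\<dots> = real (card K1) * ((4 * a - 1) / (3 * c)) ^ d + real (card K2) * ((4 * b - 1) / (3 * c)) ^ d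
      + (4 - real (card K1) - real (card K2)) * ((- 1) / (3 * c)) ^ d"
    using sum_level_coeffs[OF K(1-3), of "\<lambda>t. ((4 * t - 1) / (3 * c)) ^ d" a b] by (simp add: y_def)
  also have "\<dots> = (real (card K1) * (4 * a - 1) ^ d + real (card K2) * (4 * b - 1) ^ d
      + 4 - real (card K1) - real (card K2)) / (3 * c) ^ d"
    using d c0 by (simp add: power_divide field_simps)
  also have "(3 * c) ^ d = 3 ^ (d div 2) * Q ^ (d div 2)"
  proof -
    have "Q > 0" using F(2) c0 by (simp add: c_def)
    then have sq: "(3 * c) ^ 2 = 3 * Q" by (simp add: F(2) c_def power_mult_distrib)
    obtain k where k: "d = 2 * k" using d(1) by blast
    then have "(3 * c) ^ d = (3 * Q) ^ k" by (simp only: power_mult sq)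
    then show ?thesis using k by (simp add: power_mult_distrib)
  qed
  finally have "(\<Sum>j\<in>{1..4}. (v \<bullet> svec j) ^ d) = ?eigenvalue" by (simp add: Q_def)
  then show "is_eigenpair d (two_face_vec K1 K2 a b) \<mu> \<longleftrightarrow> \<mu> = ?eigenvalue"
    using E(2) by (simp add: v_def)
qed

lemma gfun_eq_linear_if_level:
  fixes B l x :: real
  assumes "even d" "d \<ge> 2" "B > 0"
    and "(- B + 4 * B * x) ^ (d - 1) - l * (- B + 4 * B * x) = (- B) ^ (d - 1) - l * (- B)"
  shows "gfun d x = (4 * l / B ^ (d - 2)) * x"
proof -
  have shift: "(- B + 4 * B * x) ^ (d - 1) = B ^ (d - 1) * (4 * x - 1) ^ (d - 1)"
    by (simp add: power_mult_distrib[symmetric] algebra_simps)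
  have "odd (d - 1)" "d - 1 = Suc (d - 2)" using assms(1,2) by simp_all
  then have "(- B) ^ (d - 1) = - (B ^ (d - 1))" "B ^ (d - 1) = B * B ^ (d - 2)" by simp_all
  then have "B * (B ^ (d - 2) * gfun d x) = B * (4 * l * x)"
    using assms(4) shift by (simp add: gfun_even[OF assms(1,2)] algebra_simps)
  then show ?thesis using assms(3) by (simp add: field_simps)
qed

text \<open>Shift the coordinates by their negative minimum -B and rescale so that they become
  nonnegative with sum 1; for even d the level equation of an eigenvector then reads
  g(x_j) = \<Lambda> x_j.\<close>
lemma even_eigenvector_coords:
  assumes d: "even d" "d \<ge> 4" and unit: "norm v = 1" and eig: "is_eigenpair d v \<mu>"
  obtains B jmin x \<Lambda> where "B > 0" "jmin \<in> {1..4}" "x jmin = 0" "(\<Sum>j\<in>{1..4}. x j) = 1"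
    "\<forall>j\<in>{1..4}. 0 \<le> x j \<and> v \<bullet> svec j = - B + 4 * B * x j \<and> gfun d (x j) = \<Lambda> * x j"
proof -
  define p where "p = (\<lambda>k. v \<bullet> svec k)"
  define l where "l = 3/4 * \<mu>"
  obtain jmax jmin where j: "jmax \<in> {1..4}" "jmin \<in> {1..4}"
    "\<forall>j\<in>{1..4}. p jmin \<le> p j \<and> p j \<le> p jmax"
    using finite_obtain_argmin_argmax[of "{1..4::nat}" p] by auto
  have level: "p j ^ (d - 1) - l * p j = p jmin ^ (d - 1) - l * p jmin" if "j \<in> {1..4}" for j
    using eigenpair_imp_level_const[OF eig that j(2)] by (simp add: p_def l_def)
  define B where "B = - p jmin"
  have "B > 0"
  proof (rule ccontr)
    assume "\<not> B > 0"
    then have "\<forall>j\<in>{1..4}. 0 \<le> p j" using j by (auto simp: B_def)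
    then have "\<forall>j\<in>{1..4}. p j = 0"
      using sum_inner_svec[of v] by (subst (asm) sum_nonneg_eq_0_iff) (auto simp: p_def)
    moreover have "(\<Sum>k\<in>{1..4}. (p k)\<^sup>2) = 4/3"
      using sum_inner_svec_sq[of v] unit by (simp add: p_def dot_square_norm)
    ultimately show False by simp
  qed
  define x where "x = (\<lambda>j. (p j + B) / (4 * B))"
  define \<Lambda> where "\<Lambda> = 4 * l / B ^ (d - 2)"
  have p_x: "p j = - B + 4 * B * x j" for j using \<open>B > 0\<close> by (simp add: x_def field_simps)
  have "x jmin = 0" by (simp add: x_def B_def)
  moreover have "(\<Sum>j\<in>{1..4}. x j) = 1"
    using sum_inner_svec[of v] \<open>B > 0\<close> by (simp add: x_def p_def sum_divide_distrib[symmetric] sum.distrib)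
  moreover have "0 \<le> x j" if "j \<in> {1..4}" for j
  proof -
    have "0 \<le> p j + B" using j that by (auto simp: B_def)
    then show ?thesis using \<open>B > 0\<close> by (simp add: x_def)
  qed
  moreover have "gfun d (x j) = \<Lambda> * x j" if "j \<in> {1..4}" for j
  proof -
    have "p jmin = - B" by (simp add: B_def)
    from level[OF that, unfolded this, unfolded p_x[of j]] show ?thesis
      using gfun_eq_linear_if_level[OF d(1) _ \<open>B > 0\<close>, of "x j" l] d by (simp add: \<Lambda>_def)
  qed
  ultimately show thesis
    using that[of B jmin x \<Lambda>] \<open>B > 0\<close> j(2) p_x by (auto simp: p_def)
qed

lemma two_face_vec_if_two_level_coords:
  assumes unit: "norm v = 1" and B: "B > 0"
    and K: "K1 \<subseteq> {1..4}" "K2 \<subseteq> {1..4}" "K1 \<inter> K2 = {}"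
    and coords: "\<forall>j\<in>{1..4}. v \<bullet> svec j = - B + 4 * B * level_coeffs K1 K2 a b j"
  shows "real (card K1) * a + real (card K2) * b = 1" "v = two_face_vec K1 K2 a b"
proof -
  have "0 = (\<Sum>j\<in>{1..4}. - B + 4 * B * level_coeffs K1 K2 a b j)"
    using sum_inner_svec[of v] coords by simp
  also have "\<dots> = 4 * B * ((\<Sum>j\<in>{1..4}. level_coeffs K1 K2 a b j) - 1)"
    by (simp add: sum_subtractf sum_distrib_left algebra_simps)
  also have "\<dots> = 4 * B * (real (card K1) * a + real (card K2) * b - 1)"
    using sum_level_coeffs[OF K, of "\<lambda>t. t" a b] by simp
  finally show sum: "real (card K1) * a + real (card K2) * b = 1" using B by simp
  show "v = two_face_vec K1 K2 a b"
    unfolding two_face_vec_normalized(3)[OF K sum]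
    by (rule unit_frame_comb_affine[OF unit frame_comb_analysis, of "- B" "4 * B"]) (use coords B in auto)
qed

lemma even_eigenvector_cases:
  assumes d: "even d" "d \<ge> 4" and unit: "norm v = 1" and eig: "is_eigenpair d v \<mu>"
  shows "(\<exists>K. K \<subseteq> {1..4} \<and> K \<noteq> {} \<and> card K \<le> 3 \<and> v = face_vec K) \<or>
    (\<exists>K1 K2 a b. K1 \<subseteq> {1..4} \<and> K2 \<subseteq> {1..4} \<and> K1 \<noteq> {} \<and> K2 \<noteq> {} \<and>
       K1 \<inter> K2 = {} \<and> card (K1 \<union> K2) \<le> 3 \<and>
       0 < a \<and> a \<le> s_star d \<and> s_star d < b \<and> b \<le> 1 \<and>
       real (card K1) * a + real (card K2) * b = 1 \<and> gfun d a / a = gfun d b / b \<and>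
       v = two_face_vec K1 K2 a b)"
proof -
  obtain B jmin x \<Lambda> where B: "B > 0" and jmin: "jmin \<in> {1..4}" "x jmin = 0"
    and sum: "(\<Sum>j\<in>{1..4}. x j) = 1"
    and x: "\<forall>j\<in>{1..4}. 0 \<le> x j \<and> v \<bullet> svec j = - B + 4 * B * x j \<and> gfun d (x j) = \<Lambda> * x j"
    by (rule even_eigenvector_coords[OF d unit eig])
  define Pos where "Pos = {j \<in> {1..4}. x j > 0}"
  have "Pos \<noteq> {}"
  proof
    assume "Pos = {}"
    then have "\<forall>j\<in>{1..4}. x j = 0" using x by (force simp: Pos_def)
    then show False using sum by simp
  qed
  then obtain jb ja where j: "jb \<in> Pos" "ja \<in> Pos" "\<forall>j\<in>Pos. x ja \<le> x j \<and> x j \<le> x jb"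
    using finite_obtain_argmin_argmax[of Pos x] by (auto simp: Pos_def)
  define a where "a = x ja"
  define b where "b = x jb"
  have "0 < a" "a \<le> b" using j by (auto simp: a_def b_def Pos_def)
  have quot: "gfun d (x j) / x j = \<Lambda>" if "j \<in> Pos" for j using x that by (auto simp: Pos_def)
  have off: "x j = 0" if "j \<in> {1..4}" "j \<notin> Pos" for j using x that by (force simp: Pos_def)
  have Pos_sub: "Pos \<subseteq> {1..4}" by (auto simp: Pos_def)
  have jmin_off: "jmin \<notin> Pos" using jmin by (simp add: Pos_def)
  have coords: "\<forall>j\<in>{1..4}. v \<bullet> svec j = - B + 4 * B * x j" using x by blast
  show ?thesis
  proof (cases "a = b")
    case True
    have "\<forall>j\<in>{1..4}. v \<bullet> svec j = - B + (4 * B * a) * level_coeffs Pos {} 1 0 j"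
      using coords j off \<open>a = b\<close> by (auto simp: level_coeffs_def a_def b_def Pos_def intro: antisym)
    then have "v = face_vec Pos"
      unfolding face_vec_normalized(4)[OF Pos_sub]
      by (rule unit_frame_comb_affine[OF unit frame_comb_analysis]) (use B \<open>0 < a\<close> in auto)
    moreover have "card Pos \<le> 3" using card_le_3_if_missing[OF Pos_sub jmin(1) jmin_off] .
    ultimately show ?thesis using \<open>Pos \<noteq> {}\<close> Pos_sub by blast
  next
    case False
    then have "a < b" using \<open>a \<le> b\<close> by simp
    have sp: "switch_point d (s_star d)" by (rule s_star_switch_point[OF d])
    have level: "gfun d a / a = gfun d b / b" using quot j by (simp add: a_def b_def)
    note ab = switch_point_level_pair[OF sp \<open>0 < a\<close> \<open>a < b\<close> level]
    have two_values: "x j = a \<or> x j = b" if "j \<in> Pos" for j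
    proof (rule ccontr)
      assume "\<not> ?thesis"
      then have "a < x j" "x j < b" using j that by (auto simp: a_def b_def less_le)
      moreover have "gfun d a / a = gfun d (x j) / x j" "gfun d (x j) / x j = gfun d b / b"
        using quot[OF that] quot[OF j(1)] quot[OF j(2)] by (simp_all add: a_def b_def)
      ultimately show False using switch_point_no_three_levels[OF sp \<open>0 < a\<close>] by blast
    qed
    define K1 where "K1 = {j \<in> {1..4}. x j = a}"
    define K2 where "K2 = {j \<in> {1..4}. x j = b}"
    have K: "K1 \<subseteq> {1..4}" "K2 \<subseteq> {1..4}" "K1 \<inter> K2 = {}" "K1 \<noteq> {}" "K2 \<noteq> {}"
      using \<open>a < b\<close> j by (auto simp: K1_def K2_def a_def b_def Pos_def)
    have "K1 \<union> K2 \<subseteq> {1..4}" "jmin \<notin> K1 \<union> K2"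
      using jmin \<open>0 < a\<close> \<open>a < b\<close> by (auto simp: K1_def K2_def)
    then have card: "card (K1 \<union> K2) \<le> 3" using card_le_3_if_missing jmin(1) by blast
    have "x j = level_coeffs K1 K2 a b j" if "j \<in> {1..4}" for j
    proof (cases "j \<in> Pos")
      case True
      then show ?thesis using two_values[OF True] that \<open>a < b\<close> by (auto simp: level_coeffs_def K1_def K2_def)
    next
      case False
      then show ?thesis using off[OF that False] that \<open>0 < a\<close> \<open>a < b\<close>
        by (auto simp: level_coeffs_def K1_def K2_def)
    qed
    then have "\<forall>j\<in>{1..4}. v \<bullet> svec j = - B + 4 * B * level_coeffs K1 K2 a b j"
      using coords by simp
    note two_face = two_face_vec_if_two_level_coords[OF unit B K(1-3) this]
    have "b \<le> 1"
      using sum member_le_sum[of jb "{1..4}" x] x j by (auto simp: b_def Pos_def)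
    then show ?thesis using K card \<open>0 < a\<close> ab level two_face by blast
  qed
qed

lemma even_eigenvalue_pos:
  assumes "even d" "d \<ge> 2" "norm v = 1" "is_eigenpair d v \<mu>"
  shows "\<mu> > 0"
proof -
  obtain j where j: "j \<in> {1..4}" "v \<bullet> svec j \<noteq> 0"
  proof (rule ccontr)
    assume "\<not> thesis"
    then have "(\<Sum>k\<in>{1..4}. (v \<bullet> svec k)\<^sup>2) = 0" using that by (intro sum.neutral) force
    then show False using sum_inner_svec_sq[of v] assms(3) by (simp add: dot_square_norm)
  qed
  have "0 < (v \<bullet> svec j) ^ d" using j assms(1) by (simp add: zero_less_power_eq)
  also have "\<dots> \<le> (\<Sum>k\<in>{1..4}. (v \<bullet> svec k) ^ d)"
    using j assms(1) by (intro member_le_sum) (auto simp: zero_le_even_power)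
  also have "\<dots> = \<mu>" using eigenvalue_eq_sum_power[OF assms(3,4)] assms(2) by simp
  finally show ?thesis .
qed

lemma even_eigenpair_iff:
  assumes d: "even d" "d \<ge> 4" and unit: "norm v = 1"
  shows "is_eigenpair d v \<mu> \<longleftrightarrow>
    (\<exists>K. K \<subseteq> {1..4} \<and> K \<noteq> {} \<and> card K \<le> 3 \<and> v = face_vec K \<and>
       \<mu> = ((4 - real (card K)) ^ (d - 1) + real (card K) ^ (d - 1)) /
           (3 ^ (d div 2) * (real (card K) * (4 - real (card K))) ^ (d div 2 - 1))) \<or>
    (\<exists>K1 K2 a b. K1 \<subseteq> {1..4} \<and> K2 \<subseteq> {1..4} \<and> K1 \<noteq> {} \<and> K2 \<noteq> {} \<and>
       K1 \<inter> K2 = {} \<and> card (K1 \<union> K2) \<le> 3 \<and>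
       0 < a \<and> a \<le> s_star d \<and> s_star d < b \<and> b \<le> 1 \<and>
       real (card K1) * a + real (card K2) * b = 1 \<and> gfun d a / a = gfun d b / b \<and>
       v = two_face_vec K1 K2 a b \<and>
       \<mu> = (real (card K1) * (4 * a - 1) ^ d + real (card K2) * (4 * b - 1) ^ d
              + 4 - real (card K1) - real (card K2)) /
           (3 ^ (d div 2) * (4 * a\<^sup>2 * real (card K1) + 4 * b\<^sup>2 * real (card K2) - 1) ^ (d div 2)))"
    (is "_ \<longleftrightarrow> ?face_case \<or> ?two_face_case")
proof -
  have face: "is_eigenpair d (face_vec K) \<mu> \<longleftrightarrow>
      \<mu> = ((4 - real (card K)) ^ (d - 1) + real (card K) ^ (d - 1)) /
          (3 ^ (d div 2) * (real (card K) * (4 - real (card K))) ^ (d div 2 - 1))"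
    if K: "K \<subseteq> {1..4}" "K \<noteq> {}" "card K \<le> 3" for K
  proof -
    have "1 \<le> real (card K)" using card_pos_if_nonempty_face[OF K(1,2)] by simp
    then show ?thesis
      using face_vec_eigenpair_iff(2)[OF K, of d] face_eigenvalue_even[OF d(1)] K(3) d by simp
  qed
  have two: "is_eigenpair d (two_face_vec K1 K2 a b) \<mu> \<longleftrightarrow>
      \<mu> = (real (card K1) * (4 * a - 1) ^ d + real (card K2) * (4 * b - 1) ^ d
             + 4 - real (card K1) - real (card K2)) /
          (3 ^ (d div 2) * (4 * a\<^sup>2 * real (card K1) + 4 * b\<^sup>2 * real (card K2) - 1) ^ (d div 2))"
    if K: "K1 \<subseteq> {1..4}" "K2 \<subseteq> {1..4}" "K1 \<inter> K2 = {}" "K1 \<noteq> {}" "card (K1 \<union> K2) \<le> 3"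
      and ab: "0 < a" "a \<le> s_star d" "s_star d < b"
      and sum: "real (card K1) * a + real (card K2) * b = 1" and level: "gfun d a / a = gfun d b / b"
    for K1 K2 a b
    using two_face_vec_eigenpair_iff(2)[OF d(1) _ K ab(1) _ sum level] ab d by simp
  show ?thesis
  proof
    assume eig: "is_eigenpair d v \<mu>"
    from even_eigenvector_cases[OF d unit eig] show "?face_case \<or> ?two_face_case"
    proof (elim disjE exE conjE)
      fix K assume K: "K \<subseteq> {1..4}" "K \<noteq> {}" "card K \<le> 3" "v = face_vec K"
      then show ?thesis using face[OF K(1-3)] eig by (intro disjI1 exI[of _ K]) simp
    next
      fix K1 K2 a b
      assume K: "K1 \<subseteq> {1..4}" "K2 \<subseteq> {1..4}" "K1 \<noteq> {}" "K2 \<noteq> {}" "K1 \<inter> K2 = {}"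
        "card (K1 \<union> K2) \<le> 3" "0 < a" "a \<le> s_star d" "s_star d < b" "b \<le> 1"
        "real (card K1) * a + real (card K2) * b = 1" "gfun d a / a = gfun d b / b"
        "v = two_face_vec K1 K2 a b"
      then show ?thesis using two[OF K(1,2,5,3,6-9,11,12)] eig
        by (intro disjI2 exI[of _ K1] exI[of _ K2] exI[of _ a] exI[of _ b]) simp
    qed
  next
    assume "?face_case \<or> ?two_face_case"
    then show "is_eigenpair d v \<mu>"
    proof (elim disjE exE conjE)
      fix K assume K: "K \<subseteq> {1..4}" "K \<noteq> {}" "card K \<le> 3" "v = face_vec K"
        "\<mu> = ((4 - real (card K)) ^ (d - 1) + real (card K) ^ (d - 1)) /
           (3 ^ (d div 2) * (real (card K) * (4 - real (card K))) ^ (d div 2 - 1))"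
      then show ?thesis using face[OF K(1-3)] by simp
    next
      fix K1 K2 a b
      assume K: "K1 \<subseteq> {1..4}" "K2 \<subseteq> {1..4}" "K1 \<noteq> {}" "K2 \<noteq> {}" "K1 \<inter> K2 = {}"
        "card (K1 \<union> K2) \<le> 3" "0 < a" "a \<le> s_star d" "s_star d < b" "b \<le> 1"
        "real (card K1) * a + real (card K2) * b = 1" "gfun d a / a = gfun d b / b"
        "v = two_face_vec K1 K2 a b"
        "\<mu> = (real (card K1) * (4 * a - 1) ^ d + real (card K2) * (4 * b - 1) ^ d
              + 4 - real (card K1) - real (card K2)) /
           (3 ^ (d div 2) * (4 * a\<^sup>2 * real (card K1) + 4 * b\<^sup>2 * real (card K2) - 1) ^ (d div 2))"
      then show ?thesis using two[OF K(1,2,5,3,6-9,11,12)] by simp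
    qed
  qed
qed

theorem mainTheorem10:
  fixes d :: nat
  assumes "d \<ge> 2"
  shows
  "(d = 2 \<longrightarrow> (\<forall>v::real^3. norm v = 1 \<longrightarrow> is_eigenpair d v (4/3)))
   \<and>
   (odd d \<and> d \<ge> 3 \<longrightarrow>
     (\<forall>(v::real^3) \<mu>. norm v = 1 \<longrightarrow>
        (is_eigenpair d v \<mu> \<longleftrightarrow>
          (\<exists>K. K \<subseteq> {1..4} \<and> K \<noteq> {} \<and> card K \<le> 3 \<and>
             v = (1 / sqrt (real (card K) * (4 - real (card K)) / 3)) *\<^sub>R (\<Sum>k\<in>K. svec k) \<and>
             \<mu> = ((4 - real (card K)) ^ (d - 1) - real (card K) ^ (d - 1)) /
                 (3 powr (real d / 2) * (real (card K) * (4 - real (card K))) powr (real d / 2 - 1)))))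
     \<and>
     (\<forall>K::nat set. K \<subseteq> {1..4} \<and> K \<noteq> {} \<and> card K \<le> 3 \<longrightarrow>
        (((4 - real (card K)) ^ (d - 1) - real (card K) ^ (d - 1)) /
           (3 powr (real d / 2) * (real (card K) * (4 - real (card K))) powr (real d / 2 - 1)) = 0
         \<longleftrightarrow> card K = 2))
     \<and>
     (let w1 = (1 / sqrt (4/3)) *\<^sub>R (svec 1 + svec 2);
          w2 = (1 / sqrt (4/3)) *\<^sub>R (svec 1 + svec 3);
          w3 = (1 / sqrt (4/3)) *\<^sub>R (svec 1 + svec 4)
      in (\<forall>v::real^3. norm v = 1 \<longrightarrow>
            (is_eigenpair d v 0 \<longleftrightarrow> v \<in> {w1, w2, w3, -w1, -w2, -w3}))
         \<and> independent {w1, w2, w3} \<and> card {w1, w2, w3} = 3))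
   \<and>
   (even d \<and> d \<ge> 4 \<longrightarrow>
     (\<forall>(v::real^3) \<mu>. norm v = 1 \<longrightarrow>
        (is_eigenpair d v \<mu> \<longleftrightarrow>
          (\<exists>K. K \<subseteq> {1..4} \<and> K \<noteq> {} \<and> card K \<le> 3 \<and>
             v = (1 / sqrt (real (card K) * (4 - real (card K)) / 3)) *\<^sub>R (\<Sum>k\<in>K. svec k) \<and>
             \<mu> = ((4 - real (card K)) ^ (d - 1) + real (card K) ^ (d - 1)) /
                 (3 ^ (d div 2) * (real (card K) * (4 - real (card K))) ^ (d div 2 - 1)))
          \<or>
          (\<exists>K1 K2 a b. K1 \<subseteq> {1..4} \<and> K2 \<subseteq> {1..4} \<and> K1 \<noteq> {} \<and> K2 \<noteq> {} \<and>
             K1 \<inter> K2 = {} \<and> card (K1 \<union> K2) \<le> 3 \<and>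
             0 < a \<and> a \<le> s_star d \<and> s_star d < b \<and> b \<le> 1 \<and>
             real (card K1) * a + real (card K2) * b = 1 \<and>
             gfun d a / a = gfun d b / b \<and>
             v = (1 / sqrt ((4 * a\<^sup>2 * real (card K1) + 4 * b\<^sup>2 * real (card K2) - 1) / 3)) *\<^sub>R
                   (a *\<^sub>R (\<Sum>k\<in>K1. svec k) + b *\<^sub>R (\<Sum>k\<in>K2. svec k)) \<and>
             \<mu> = (real (card K1) * (4 * a - 1) ^ d + real (card K2) * (4 * b - 1) ^ d
                    + 4 - real (card K1) - real (card K2)) /
                 (3 ^ (d div 2) * (4 * a\<^sup>2 * real (card K1) + 4 * b\<^sup>2 * real (card K2) - 1) ^ (d div 2)))))
     \<and>
     (\<forall>(v::real^3) \<mu>. norm v = 1 \<and> is_eigenpair d v \<mu> \<longrightarrow> \<mu> > 0))"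
  unfolding Let_def
  apply (intro conjI impI allI)
  subgoal by (simp add: quadratic_eigenpair)
  subgoal for v \<mu> using odd_eigenpair_iff[of d v \<mu>] unfolding face_vec_def by simp
  subgoal for K using odd_face_eigenvalue_eq_0_iff[of d "card K"] card_pos_if_nonempty_face[of K] by simp
  subgoal for v using odd_eigenpair_zero_iff[of d v] pair_face_vecs[of v] by simp
  subgoal using independent_pair_sums by simp
  subgoal using independent_pair_sums by simp
  subgoal for v \<mu> using even_eigenpair_iff[of d v \<mu>] unfolding face_vec_def two_face_vec_def by simp
  subgoal for v \<mu> using even_eigenvalue_pos[of d v \<mu>] by simp
  done

end
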